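(* Let $a,c,d\in\mathbb{H}$ and $b\in\mathrm{Im}\,\mathbb{H}$, and let $$X=\begin{bmatrix}0&a&0\\-\bar a&b&0\\0&0&0\end{bmatrix},\qquad Y=\begin{bmatrix}0&0&c\\0&0&d\\-\bar c&-\bar d&0\end{bmatrix}\in\mathfrak{sp}(3),$$ and assume $X$ and $Y$ are linearly independent over $\mathbb{R}$. Then $[X,Y]=0$ if and only if $a=d=0$.
   Context: $\mathbb{H}$ denotes the quaternions, $\mathrm{Im}\,\mathbb{H}$ the purely imaginary quaternions, and $[X,Y]=XY-YX$. *)

theory Defs
  imports Main "HOL.Real"
begin

datatype quat = Quat (qre: real) (qi: real) (qj: real) (qk: real)

definition qzero :: quat where "qzero = Quat 0 0 0 0"

definition qadd :: "quat \<Rightarrow> quat \<Rightarrow> quat" where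
  "qadd p q = Quat (qre p + qre q) (qi p + qi q) (qj p + qj q) (qk p + qk q)"

definition qneg :: "quat \<Rightarrow> quat" where
  "qneg p = Quat (- qre p) (- qi p) (- qj p) (- qk p)"

definition qscale :: "real \<Rightarrow> quat \<Rightarrow> quat" where
  "qscale r p = Quat (r * qre p) (r * qi p) (r * qj p) (r * qk p)"

definition qcnj :: "quat \<Rightarrow> quat" where
  "qcnj p = Quat (qre p) (- qi p) (- qj p) (- qk p)"

text \<open>Hamilton product (i^2 = j^2 = k^2 = ijk = -1).\<close>
definition qmul :: "quat \<Rightarrow> quat \<Rightarrow> quat" where
  "qmul p q = Quat
     (qre p * qre q - qi p * qi q - qj p * qj q - qk p * qk q)
     (qre p * qi q + qi p * qre q + qj p * qk q - qk p * qj q)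
     (qre p * qj q - qi p * qk q + qj p * qre q + qk p * qi q)
     (qre p * qk q + qi p * qj q - qj p * qi q + qk p * qre q)"

definition ImH :: "quat set" where "ImH = {p. qre p = 0}"

text \<open>3x3 quaternionic matrices, indices 0,1,2 (entries outside are irrelevant).\<close>
type_synonym qmat = "nat \<Rightarrow> nat \<Rightarrow> quat"

definition mmul :: "qmat \<Rightarrow> qmat \<Rightarrow> qmat" where
  "mmul A B = (\<lambda>i j. qadd (qadd (qmul (A i 0) (B 0 j)) (qmul (A i 1) (B 1 j))) (qmul (A i 2) (B 2 j)))"

definition mat3 :: "quat list list \<Rightarrow> qmat" where
  "mat3 rows = (\<lambda>i j. if i < 3 \<and> j < 3 then rows ! i ! j else qzero)"

definition commutator_zero :: "qmat \<Rightarrow> qmat \<Rightarrow> bool" where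
  "commutator_zero A B \<longleftrightarrow> (\<forall>i<3. \<forall>j<3. mmul A B i j = mmul B A i j)"

definition lin_indep2 :: "qmat \<Rightarrow> qmat \<Rightarrow> bool" where
  "lin_indep2 A B \<longleftrightarrow> (\<forall>\<alpha> \<beta>::real.
     (\<forall>i<3. \<forall>j<3. qadd (qscale \<alpha> (A i j)) (qscale \<beta> (B i j)) = qzero) \<longrightarrow> \<alpha> = 0 \<and> \<beta> = 0)"

end

theory Submission
  imports Defs
begin

text \<open>
  The commutator has only four nontrivial entries: a d at (0,2), b d - conj(a) c at (1,2),
  and their negated conjugates at (2,0) and (2,1). Quaternions have no zero divisors, so
  a d = 0 forces a = 0 or d = 0. If a = 0 the (1,2) entry is b d, and b = 0 is excluded because
  X is nonzero; if d = 0 the (2,1) entry is -conj(c) a, and c = 0 is excluded because Y is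
  nonzero. Linear independence is used only to make X and Y nonzero.
\<close>

definition qnorm2 :: "quat \<Rightarrow> real" where
  "qnorm2 p = (qre p)\<^sup>2 + (qi p)\<^sup>2 + (qj p)\<^sup>2 + (qk p)\<^sup>2"

lemma qnorm2_qmul: "qnorm2 (qmul p q) = qnorm2 p * qnorm2 q"
  unfolding qnorm2_def qmul_def by (simp add: power2_eq_square algebra_simps)

lemma qnorm2_eq_0_iff: "qnorm2 p = 0 \<longleftrightarrow> p = qzero"
proof
  assume "qnorm2 p = 0"
  then have "qre p = 0 \<and> qi p = 0 \<and> qj p = 0 \<and> qk p = 0"
    unfolding qnorm2_def by (smt (verit) zero_le_power2 zero_eq_power2)
  then show "p = qzero" unfolding qzero_def by (cases p) auto
qed (simp add: qnorm2_def qzero_def)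

lemma qmul_eq_qzero_iff: "qmul p q = qzero \<longleftrightarrow> p = qzero \<or> q = qzero"
  by (metis mult_eq_0_iff qnorm2_eq_0_iff qnorm2_qmul)

lemma qcnj_eq_qzero_iff [simp]: "qcnj p = qzero \<longleftrightarrow> p = qzero"
  by (cases p) (auto simp: qcnj_def qzero_def)

lemma qneg_eq_qzero_iff [simp]: "qneg p = qzero \<longleftrightarrow> p = qzero"
  by (cases p) (auto simp: qneg_def qzero_def)

lemma qzero_simps [simp]:
  "qadd qzero p = p" "qadd p qzero = p" "qmul qzero p = qzero" "qmul p qzero = qzero"
  "qscale 0 p = qzero" "qscale 1 p = p" "qneg qzero = qzero" "qcnj qzero = qzero"
  by (cases p; simp add: qadd_def qmul_def qscale_def qneg_def qcnj_def qzero_def)+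

lemma all_less_3_all_less_3_iff:
  "(\<forall>i<3. \<forall>j<3. P i j) \<longleftrightarrow>
     P 0 0 \<and> P 0 1 \<and> P 0 2 \<and> P 1 0 \<and> P 1 1 \<and> P 1 2 \<and> P 2 0 \<and> P 2 1 \<and> P 2 2"
  for P :: "nat \<Rightarrow> nat \<Rightarrow> bool"
  by (auto simp: less_Suc_eq numeral_3_eq_3 numeral_2_eq_2)

lemma lin_indep2_nonzero:
  assumes "lin_indep2 A B"
  shows "\<not> (\<forall>i<3. \<forall>j<3. A i j = qzero)" and "\<not> (\<forall>i<3. \<forall>j<3. B i j = qzero)"
proof -
  have "\<not> (\<forall>i<3. \<forall>j<3. qadd (qscale 1 (A i j)) (qscale 0 (B i j)) = qzero)"
    and "\<not> (\<forall>i<3. \<forall>j<3. qadd (qscale 0 (A i j)) (qscale 1 (B i j)) = qzero)"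
    using assms unfolding lin_indep2_def by (metis zero_neq_one)+
  then show "\<not> (\<forall>i<3. \<forall>j<3. A i j = qzero)" and "\<not> (\<forall>i<3. \<forall>j<3. B i j = qzero)"
    by simp_all
qed

lemma commutator_zero_block_iff:
  "commutator_zero
     (mat3 [[qzero, a, qzero], [qneg (qcnj a), b, qzero], [qzero, qzero, qzero]])
     (mat3 [[qzero, qzero, c], [qzero, qzero, d], [qneg (qcnj c), qneg (qcnj d), qzero]])
   \<longleftrightarrow> qmul a d = qzero
     \<and> qadd (qmul (qneg (qcnj a)) c) (qmul b d) = qzero
     \<and> qmul (qneg (qcnj d)) (qneg (qcnj a)) = qzero
     \<and> qadd (qmul (qneg (qcnj c)) a) (qmul (qneg (qcnj d)) b) = qzero"
  unfolding commutator_zero_def all_less_3_all_less_3_iff mmul_def mat3_def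
  by (auto simp: eq_commute)

theorem proposition3p1:
  fixes a b c d :: quat
  assumes "b \<in> ImH"
    and "lin_indep2
           (mat3 [[qzero, a, qzero], [qneg (qcnj a), b, qzero], [qzero, qzero, qzero]])
           (mat3 [[qzero, qzero, c], [qzero, qzero, d], [qneg (qcnj c), qneg (qcnj d), qzero]])"
  shows "commutator_zero
           (mat3 [[qzero, a, qzero], [qneg (qcnj a), b, qzero], [qzero, qzero, qzero]])
           (mat3 [[qzero, qzero, c], [qzero, qzero, d], [qneg (qcnj c), qneg (qcnj d), qzero]])
         \<longleftrightarrow> a = qzero \<and> d = qzero"
proof -
  have X_nonzero: "a \<noteq> qzero \<or> b \<noteq> qzero" and Y_nonzero: "c \<noteq> qzero \<or> d \<noteq> qzero"
    using lin_indep2_nonzero[OF assms(2)]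
    by (auto simp: all_less_3_all_less_3_iff mat3_def)
  have "a = qzero \<and> d = qzero"
    if ad: "qmul a d = qzero"
      and entry12: "qadd (qmul (qneg (qcnj a)) c) (qmul b d) = qzero"
      and entry21: "qadd (qmul (qneg (qcnj c)) a) (qmul (qneg (qcnj d)) b) = qzero"
  proof (cases "a = qzero")
    case True
    with entry12 X_nonzero show ?thesis by (simp add: qmul_eq_qzero_iff)
  next
    case False
    with ad have "d = qzero" by (simp add: qmul_eq_qzero_iff)
    with entry21 False Y_nonzero show ?thesis by (simp add: qmul_eq_qzero_iff)
  qed
  then show ?thesis by (auto simp: commutator_zero_block_iff)
qed

end
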